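(* Let $k$ be a field, $S=k[[x_1,\dots,x_d]]$, $n>1$ an integer, and $R=S^{(n)}$ the $n$-th Veronese subring of $S$. Let $L=x_1S\cap R$, which generates the divisor class group $\operatorname{Cl}(R)\cong\mathbb Z/n\mathbb Z$, and for $1\leq i\leq n-1$ let $L^{(i)}$ be the $i$-th symbolic power of $L$ (the rank one reflexive module representing $i[L]$ in $\operatorname{Cl}(R)$). Then the minimal number of generators of $L^{(i)}$ is $$\mu(L^{(i)})=\binom{n-i+d-1}{d-1}=\frac{(n+d-i-1)!}{(d-1)!\,(n-i)!}\quad\text{for } i=1,\dots,n-1,$$ i.e., the number of monomials of degree $n-i$ in $d$ variables.
   Context: The $n$-th Veronese subring $S^{(n)}$ is the subring of $S$ consisting of power series all of whose monomials have degree divisible by $n$ (the subring generated by monomials of degree $n$); it is a complete Cohen-Macaulay normal local domain with isolated singularity. For a normal domain $R$, $\operatorname{Cl}(R)$ is the group of isomorphism classes of rank one reflexive $R$-modules, with $[\operatorname{Hom}_R(I,J)]=[J]-[I]$. *)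

theory Defs
  imports "HOL-Algebra.Algebra"
begin

text \<open>Formal power series in d variables X_0,...,X_(d-1) over a field 'k, represented as
  coefficient functions on exponent vectors (nat \<Rightarrow> nat) supported on {0..<d}.\<close>

type_synonym 'k mps = "(nat \<Rightarrow> nat) \<Rightarrow> 'k"

definition exps :: "nat \<Rightarrow> (nat \<Rightarrow> nat) set" where
  "exps d = {a. \<forall>j\<ge>d. a j = 0}"

definition mdeg :: "nat \<Rightarrow> (nat \<Rightarrow> nat) \<Rightarrow> nat" where
  "mdeg d a = (\<Sum>j<d. a j)"

definition PS :: "nat \<Rightarrow> ('k::field) mps ring" where
  "PS d = \<lparr> carrier = {f. \<forall>a. a \<notin> exps d \<longrightarrow> f a = 0},
            Group.monoid.mult = (\<lambda>f g m. if m \<in> exps d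
                      then (\<Sum>a\<in>{a. a \<le> m}. f a * g (\<lambda>j. m j - a j)) else 0),
            Group.monoid.one = (\<lambda>a. if a = (\<lambda>_. 0) then 1 else 0),
            Ring.ring.zero = (\<lambda>_. 0),
            Ring.ring.add = (\<lambda>f g a. f a + g a) \<rparr>"

definition Veronese :: "nat \<Rightarrow> nat \<Rightarrow> ('k::field) mps ring" where
  "Veronese d n = (PS d) \<lparr> carrier :=
      {f \<in> carrier (PS d). \<forall>a. f a \<noteq> 0 \<longrightarrow> n dvd mdeg d a} \<rparr>"

text \<open>The first variable x_1 (index 0 here).\<close>
definition var1 :: "('k::field) mps" where
  "var1 = (\<lambda>a. if a = (\<lambda>j. if j = 0 then 1 else 0) then 1 else 0)"

definition Lideal :: "nat \<Rightarrow> nat \<Rightarrow> ('k::field) mps set" where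
  "Lideal d n = {var1 \<otimes>\<^bsub>PS d\<^esub> s | s. s \<in> carrier (PS d)} \<inter> carrier (Veronese d n)"

definition ideal_pow :: "('a, 'b) ring_scheme \<Rightarrow> 'a set \<Rightarrow> nat \<Rightarrow> 'a set" where
  "ideal_pow R I i = ((\<lambda>J. ideal_prod R J I) ^^ i) (carrier R)"

text \<open>Symbolic power of a prime ideal P: P^(i) = P^i R_P \<inter> R.\<close>
definition symbolic_power :: "('a, 'b) ring_scheme \<Rightarrow> 'a set \<Rightarrow> nat \<Rightarrow> 'a set" where
  "symbolic_power R P i =
     {r \<in> carrier R. \<exists>s \<in> carrier R - P. s \<otimes>\<^bsub>R\<^esub> r \<in> ideal_pow R P i}"

definition min_gens :: "('a, 'b) ring_scheme \<Rightarrow> 'a set \<Rightarrow> nat" where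
  "min_gens R I = (LEAST m. \<exists>G. finite G \<and> G \<subseteq> carrier R \<and> card G = m \<and> genideal R G = I)"

end

theory Submission
  imports Defs "HOL-Library.Function_Algebras" "HOL-Library.Multiset"
begin

text \<open>The symbolic power \<open>L\<^sup>(\<^sup>i\<^sup>)\<close> is the ideal of \<open>R\<close> of elements of
  \<open>x\<^sub>1\<close>-order at least \<open>i\<close>. This ideal contains \<open>L\<^sup>i\<close>, and \<open>x\<^sub>1\<close>-order can be
  cancelled against factors outside \<open>L\<close> because the power series ring is a domain;
  conversely, for \<open>r\<close> of \<open>x\<^sub>1\<close>-order at least \<open>i\<close> the factor \<open>x\<^sub>2\<^bsup>ni\<^esup> \<notin> L\<close>
  moves \<open>r\<close> into \<open>L\<^sup>i\<close>.

  The ideal is generated by the monomials of degree \<open>n\<close> divisible by \<open>x\<^sub>1\<^sup>i\<close>, which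
  correspond to the monomials of degree \<open>n - i\<close>. No generating set is smaller:
  multiplication by an element of \<open>R\<close> acts on the coefficients of these monomials through
  its constant term only, so the coefficient vectors of any generating set span the
  (linearly independent) coefficient vectors of the monomial generators.\<close>

section \<open>Exponent vectors\<close>

lemma exps_add: "a \<in> exps d \<Longrightarrow> b \<in> exps d \<Longrightarrow> a + b \<in> exps d"
  by (simp add: exps_def)

lemma exps_diff: "m \<in> exps d \<Longrightarrow> m - a \<in> exps d"
  by (simp add: exps_def)

lemma exps_le: "a \<le> m \<Longrightarrow> m \<in> exps d \<Longrightarrow> a \<in> exps d"
  by (simp add: exps_def le_fun_def) (metis le_zero_eq)

lemma le_add_diff_inverse_exp: "(a :: nat \<Rightarrow> nat) \<le> m \<Longrightarrow> a + (m - a) = m"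
  by (rule ext) (simp add: le_fun_def)

lemma le_add_diff_inverse2_exp: "(a :: nat \<Rightarrow> nat) \<le> m \<Longrightarrow> m - a + a = m"
  by (rule ext) (simp add: le_fun_def)

lemma mdeg_add: "mdeg d (a + b) = mdeg d a + mdeg d b"
  by (simp add: mdeg_def sum.distrib)

lemma mdeg_diff: "a \<le> m \<Longrightarrow> mdeg d m = mdeg d a + mdeg d (m - a)"
  by (metis le_add_diff_inverse_exp mdeg_add)

lemma exps_mdeg_eq_0: assumes "a \<in> exps d" shows "mdeg d a = 0 \<longleftrightarrow> a = 0"
proof
  assume "mdeg d a = 0"
  hence "\<forall>j<d. a j = 0" by (simp add: mdeg_def)
  thus "a = 0" using assms by (simp add: exps_def fun_eq_iff) (metis leI)
qed (simp add: mdeg_def)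

lemma component_le_mdeg: "j < d \<Longrightarrow> a j \<le> mdeg d a"
  unfolding mdeg_def by (rule member_le_sum) auto

lemma finite_exps_le: assumes "m \<in> exps d" shows "finite {a. a \<le> m}"
proof -
  have "{a. a \<le> m} \<subseteq> (\<lambda>f j. if j < d then f j else 0) ` (\<Pi>\<^sub>E j\<in>{..<d}. {0..m j})"
  proof
    fix a assume "a \<in> {a. a \<le> m}"
    hence "a \<le> m" and "a \<in> exps d" using exps_le assms by auto
    hence "restrict a {..<d} \<in> (\<Pi>\<^sub>E j\<in>{..<d}. {0..m j})"
      and "a = (\<lambda>j. if j < d then restrict a {..<d} j else 0)"
      by (auto simp: le_fun_def exps_def fun_eq_iff)
    thus "a \<in> (\<lambda>f j. if j < d then f j else 0) ` (\<Pi>\<^sub>E j\<in>{..<d}. {0..m j})" by blast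
  qed
  thus ?thesis by (rule finite_subset) (auto intro: finite_PiE)
qed

lemma finite_exps_mdeg: "finite {a \<in> exps d. mdeg d a = D}"
proof -
  have "{a \<in> exps d. mdeg d a = D} \<subseteq> {a. a \<le> (\<lambda>j. if j < d then D else 0)}"
    by (auto simp: le_fun_def exps_def dest: component_le_mdeg)
  thus ?thesis by (rule finite_subset) (rule finite_exps_le[of _ d], simp add: exps_def)
qed

lemma sum_replicate_mset_count:
  assumes "set_mset M \<subseteq> {..<d :: nat}" shows "(\<Sum>j<d. replicate_mset (count M j) j) = M"
proof (rule multiset_eqI)
  fix x
  have "x < d" if "count M x \<noteq> 0" using that assms by (auto simp: count_eq_zero_iff)
  thus "count (\<Sum>j<d. replicate_mset (count M j) j) x = count M x"
    by (auto simp: count_sum count_eq_zero_iff)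
qed

lemma card_exps_mdeg: "card {a \<in> exps d. mdeg d a = D} = (d + D - 1) choose D"
proof -
  let ?to_mset = "\<lambda>a. \<Sum>j<d. replicate_mset (a j) j"
  have "bij_betw count (multisets_of_size {..<d} D) {a \<in> exps d. mdeg d a = D}"
  proof (rule bij_betw_byWitness[where f' = ?to_mset])
    show "\<forall>M\<in>multisets_of_size {..<d} D. ?to_mset (count M) = M"
      by (simp add: multisets_of_size_def sum_replicate_mset_count)
    show "\<forall>a\<in>{a \<in> exps d. mdeg d a = D}. count (?to_mset a) = a"
      by (auto simp: count_sum exps_def fun_eq_iff)
    show "count ` multisets_of_size {..<d} D \<subseteq> {a \<in> exps d. mdeg d a = D}"
    proof safe
      fix M assume M: "M \<in> multisets_of_size {..<d} D"
      hence sub: "set_mset M \<subseteq> {..<d}" by (simp add: multisets_of_size_def)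
      thus "count M \<in> exps d" unfolding exps_def by (auto simp: count_eq_zero_iff)
      have "size M = size (?to_mset (count M))" by (simp only: sum_replicate_mset_count[OF sub])
      also have "\<dots> = mdeg d (count M)" by (simp add: mdeg_def)
      finally show "mdeg d (count M) = D" using M by (simp add: multisets_of_size_def)
    qed
    show "?to_mset ` {a \<in> exps d. mdeg d a = D} \<subseteq> multisets_of_size {..<d} D"
      by (auto simp: multisets_of_size_def mdeg_def set_mset_sum split: if_splits)
  qed
  hence "card {a \<in> exps d. mdeg d a = D} = card (multisets_of_size {..<d} D)"
    by (simp add: bij_betw_same_card)
  thus ?thesis by (simp add: card_multisets_of_size)
qed

definition var_exp :: "nat \<Rightarrow> nat \<Rightarrow> nat \<Rightarrow> nat" where
  "var_exp j k = (\<lambda>l. if l = j then k else 0)"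

lemma var_exp_apply [simp]: "var_exp j k l = (if l = j then k else 0)"
  by (simp add: var_exp_def)

lemma var_exp_0 [simp]: "var_exp j 0 = 0"
  by (simp add: fun_eq_iff)

lemma var_exp_in_exps: "j < d \<Longrightarrow> var_exp j k \<in> exps d"
  by (simp add: exps_def)

lemma mdeg_var_exp: "j < d \<Longrightarrow> mdeg d (var_exp j k) = k"
  by (simp add: mdeg_def)

lemma var_exp_le_iff: "var_exp j k \<le> m \<longleftrightarrow> k \<le> m j"
  by (auto simp: le_fun_def)

lemma exists_le_mdeg_eq:
  assumes "k \<le> mdeg d e" shows "\<exists>b \<le> e. mdeg d b = k"
  using assms
proof (induction k)
  case 0
  show ?case by (intro exI[of _ 0]) (simp add: le_fun_def mdeg_def)
next
  case (Suc k)
  then obtain b where b: "b \<le> e" "mdeg d b = k" by auto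
  have "\<exists>j<d. b j < e j"
  proof (rule ccontr)
    assume "\<not> (\<exists>j<d. b j < e j)"
    hence "mdeg d e \<le> mdeg d b" unfolding mdeg_def by (intro sum_mono) auto
    thus False using b Suc.prems by simp
  qed
  then obtain j where j: "j < d" "b j < e j" by blast
  have "b + var_exp j 1 \<le> e" using j b(1) by (auto simp: le_fun_def Suc_le_eq)
  moreover have "mdeg d (b + var_exp j 1) = Suc k" using b(2) j(1) by (simp add: mdeg_add mdeg_var_exp)
  ultimately show ?case by blast
qed

definition lex_less :: "nat \<Rightarrow> (nat \<Rightarrow> nat) \<Rightarrow> (nat \<Rightarrow> nat) \<Rightarrow> bool" where
  "lex_less d a b \<longleftrightarrow> (\<exists>k<d. (\<forall>j<k. a j = b j) \<and> a k < b k)"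

definition glex_less :: "nat \<Rightarrow> (nat \<Rightarrow> nat) \<Rightarrow> (nat \<Rightarrow> nat) \<Rightarrow> bool" where
  "glex_less d a b \<longleftrightarrow> mdeg d a < mdeg d b \<or> mdeg d a = mdeg d b \<and> lex_less d a b"

lemma lex_less_irrefl: "\<not> lex_less d a a"
  by (simp add: lex_less_def)

lemma lex_less_trans: assumes "lex_less d a b" "lex_less d b c" shows "lex_less d a c"
proof -
  obtain k where k: "k < d" "\<forall>j<k. a j = b j" "a k < b k"
    using assms(1) by (auto simp: lex_less_def)
  obtain l where l: "l < d" "\<forall>j<l. b j = c j" "b l < c l"
    using assms(2) by (auto simp: lex_less_def)
  have "\<forall>j<min k l. a j = c j" using k(2) l(2) by simp
  moreover have "a (min k l) < c (min k l)"
  proof (cases k l rule: linorder_cases)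
    case less thus ?thesis using k(3) l(2) by (simp add: min_def)
  next
    case equal thus ?thesis using k(3) l(3) by simp
  next
    case greater thus ?thesis using k(2) l(3) by (simp add: min_def)
  qed
  moreover have "min k l < d" using k(1) by simp
  ultimately show ?thesis unfolding lex_less_def by blast
qed

lemma lex_less_total:
  assumes "a \<in> exps d" "b \<in> exps d" "a \<noteq> b" shows "lex_less d a b \<or> lex_less d b a"
proof -
  define k where "k = (LEAST j. a j \<noteq> b j)"
  have "\<exists>j. a j \<noteq> b j" using assms(3) by (simp add: fun_eq_iff)
  hence k: "a k \<noteq> b k" unfolding k_def by (rule LeastI_ex)
  have below: "\<forall>j<k. a j = b j" unfolding k_def using not_less_Least by blast
  have "k < d"
  proof (rule ccontr)
    assume "\<not> k < d" thus False using assms(1,2) k by (simp add: exps_def)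
  qed
  have "a k < b k \<or> b k < a k" using k by arith
  thus ?thesis using \<open>k < d\<close> below unfolding lex_less_def by (metis (no_types))
qed

lemma lex_less_add_right: "lex_less d a b \<Longrightarrow> lex_less d (a + c) (b + c)"
  by (simp add: lex_less_def)

lemma glex_less_irrefl: "\<not> glex_less d a a"
  by (simp add: glex_less_def lex_less_irrefl)

lemma glex_less_trans: "glex_less d a b \<Longrightarrow> glex_less d b c \<Longrightarrow> glex_less d a c"
  unfolding glex_less_def using lex_less_trans[of d a b c] by auto

lemma glex_less_add_right: "glex_less d a b \<Longrightarrow> glex_less d (a + c) (b + c)"
  by (auto simp: glex_less_def mdeg_add lex_less_add_right)

lemma glex_less_add:
  assumes "a = a' \<or> glex_less d a' a" "b = b' \<or> glex_less d b' b" "a \<noteq> a' \<or> b \<noteq> b'"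
  shows "glex_less d (a' + b') (a + b)"
proof -
  have right: "glex_less d (a + b') (a + b)" if "glex_less d b' b"
    using glex_less_add_right[OF that, of a] by (simp add: add.commute)
  show ?thesis
  proof (cases "a = a'")
    case True thus ?thesis using assms(2,3) right by auto
  next
    case False
    hence "glex_less d (a' + b') (a + b')" using assms(1) glex_less_add_right by blast
    thus ?thesis using assms(2) right glex_less_trans by blast
  qed
qed

lemma exists_lex_least:
  assumes "finite M" "M \<noteq> {}" "M \<subseteq> exps d"
  shows "\<exists>m\<in>M. \<forall>a\<in>M. a \<noteq> m \<longrightarrow> lex_less d m a"
  using assms
proof (induction M rule: finite_ne_induct)
  case (singleton x) thus ?case by simp
next
  case (insert x F)
  then obtain m where m: "m \<in> F" "\<forall>a\<in>F. a \<noteq> m \<longrightarrow> lex_less d m a" by auto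
  have "m \<noteq> x" using m(1) insert.hyps by blast
  hence "lex_less d x m \<or> lex_less d m x"
    using lex_less_total[of x d m] insert.prems m(1) by auto
  thus ?case
  proof
    assume "lex_less d x m"
    hence "\<forall>a\<in>insert x F. a \<noteq> x \<longrightarrow> lex_less d x a" using m lex_less_trans[of d x m] by auto
    thus ?case by blast
  next
    assume "lex_less d m x"
    hence "\<forall>a\<in>insert x F. a \<noteq> m \<longrightarrow> lex_less d m a" using m(2) by auto
    thus ?case using m(1) by blast
  qed
qed

section \<open>Multiplication of power series\<close>

definition ps_mult :: "nat \<Rightarrow> ('k::field) mps \<Rightarrow> 'k mps \<Rightarrow> 'k mps" where
  "ps_mult d f g = (\<lambda>m. if m \<in> exps d then \<Sum>a | a \<le> m. f a * g (m - a) else 0)"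

definition ps_monom :: "(nat \<Rightarrow> nat) \<Rightarrow> ('k::field) mps" where
  "ps_monom c = (\<lambda>a. if a = c then 1 else 0)"

lemma carrier_PS: "carrier (PS d) = {f. \<forall>a. a \<notin> exps d \<longrightarrow> f a = 0}"
  by (simp add: PS_def)

lemma mult_PS: "f \<otimes>\<^bsub>PS d\<^esub> g = ps_mult d f g"
  unfolding PS_def ps_mult_def fun_diff_def by simp

lemma add_PS: "f \<oplus>\<^bsub>PS d\<^esub> g = f + g"
  by (simp add: PS_def plus_fun_def)

lemma zero_PS: "\<zero>\<^bsub>PS d\<^esub> = 0"
  by (simp add: PS_def zero_fun_def)

lemma one_PS: "\<one>\<^bsub>PS d\<^esub> = ps_monom 0"
  by (simp add: PS_def ps_monom_def zero_fun_def)

lemma ps_mult_apply: "m \<in> exps d \<Longrightarrow> ps_mult d f g m = (\<Sum>a | a \<le> m. f a * g (m - a))"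
  by (simp add: ps_mult_def)

lemma ps_mult_in_carrier: "ps_mult d f g \<in> carrier (PS d)"
  by (simp add: carrier_PS ps_mult_def)

lemma ps_monom_in_carrier: "c \<in> exps d \<Longrightarrow> ps_monom c \<in> carrier (PS d)"
  by (auto simp: carrier_PS ps_monom_def)

lemma ps_mult_nonzeroE:
  assumes "ps_mult d f g m \<noteq> 0"
  obtains a where "m \<in> exps d" "a \<le> m" "f a \<noteq> 0" "g (m - a) \<noteq> 0"
proof -
  have m: "m \<in> exps d"
  proof (rule ccontr)
    assume "m \<notin> exps d" thus False using assms by (simp add: ps_mult_def)
  qed
  hence "(\<Sum>a | a \<le> m. f a * g (m - a)) \<noteq> 0" using assms by (simp add: ps_mult_apply)
  then obtain a where "a \<le> m" "f a * g (m - a) \<noteq> 0"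
    using sum.not_neutral_contains_not_neutral by blast
  thus thesis using that m by simp
qed

lemma diff_diff_exp: assumes "b \<le> a" "a \<le> (m :: nat \<Rightarrow> nat)" shows "(m - b) - (a - b) = m - a"
proof (rule ext)
  fix x
  have "b x \<le> a x" "a x \<le> m x" using assms by (simp_all add: le_fun_def)
  thus "(m - b - (a - b)) x = (m - a) x" by simp
qed

lemma diff_diff_exp_cancel: "(a :: nat \<Rightarrow> nat) \<le> m \<Longrightarrow> m - (m - a) = a"
  by (auto simp: fun_eq_iff le_fun_def)

lemma ps_mult_commute: "ps_mult d f g = ps_mult d g f"
proof (rule ext)
  fix m
  have "(\<Sum>a | a \<le> m. f a * g (m - a)) = (\<Sum>a | a \<le> m. g a * f (m - a))"
    by (rule sum.reindex_bij_witness[where i = "\<lambda>a. m - a" and j = "\<lambda>a. m - a"])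
      (simp_all add: diff_diff_exp_cancel le_fun_def)
  thus "ps_mult d f g m = ps_mult d g f m" by (simp add: ps_mult_def)
qed

lemma ps_mult_apply_diff:
  assumes "m \<in> exps d" "b \<le> m"
  shows "ps_mult d g h (m - b) = (\<Sum>a | a \<le> m \<and> b \<le> a. g (a - b) * h (m - a))"
proof -
  have "(\<Sum>a | a \<le> m \<and> b \<le> a. g (a - b) * h (m - a)) = (\<Sum>c | c \<le> m - b. g c * h (m - b - c))"
  proof (rule sum.reindex_bij_witness[where i = "\<lambda>c. b + c" and j = "\<lambda>a. a - b"])
    fix a assume "a \<in> {a. a \<le> m \<and> b \<le> a}"
    hence am: "a \<le> m" and ba: "b \<le> a" by auto
    show "b + (a - b) = a" using ba by (rule le_add_diff_inverse_exp)
    show "a - b \<in> {c. c \<le> m - b}" using am by (simp add: le_fun_def diff_le_mono)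
    show "g (a - b) * h (m - b - (a - b)) = g (a - b) * h (m - a)"
      using diff_diff_exp[OF ba am] by simp
  next
    fix c assume "c \<in> {c. c \<le> m - b}"
    thus "b + c - b = c" "b + c \<in> {a. a \<le> m \<and> b \<le> a}"
      using assms(2) by (auto simp: le_fun_def le_diff_conv2 add.commute)
  qed
  thus ?thesis by (simp add: ps_mult_apply[OF exps_diff[OF assms(1)]])
qed

lemma ps_mult_assoc: "ps_mult d (ps_mult d f g) h = ps_mult d f (ps_mult d g h)"
proof (rule ext)
  fix m
  show "ps_mult d (ps_mult d f g) h m = ps_mult d f (ps_mult d g h) m"
  proof (cases "m \<in> exps d")
    case False thus ?thesis by (simp add: ps_mult_def)
  next
    case m: True
    define A where "A = {a. a \<le> m}"
    have "ps_mult d (ps_mult d f g) h m = (\<Sum>a\<in>A. \<Sum>b | b \<in> A \<and> b \<le> a. f b * g (a - b) * h (m - a))"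
    proof (unfold ps_mult_apply[OF m] A_def, rule sum.cong[OF refl])
      fix a assume "a \<in> {a. a \<le> m}"
      hence "a \<in> exps d" and "{b. b \<in> {a. a \<le> m} \<and> b \<le> a} = {b. b \<le> a}"
        using m exps_le order_trans by blast+
      thus "ps_mult d f g a * h (m - a) = (\<Sum>b | b \<in> {a. a \<le> m} \<and> b \<le> a. f b * g (a - b) * h (m - a))"
        by (simp add: ps_mult_apply sum_distrib_right)
    qed
    also have "\<dots> = (\<Sum>b\<in>A. \<Sum>a | a \<in> A \<and> b \<le> a. f b * g (a - b) * h (m - a))"
      using sum.swap_restrict[OF finite_exps_le[OF m] finite_exps_le[OF m]] by (simp add: A_def)
    also have "\<dots> = (\<Sum>b\<in>A. f b * ps_mult d g h (m - b))"
      by (rule sum.cong[OF refl])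
        (simp add: A_def ps_mult_apply_diff[OF m] sum_distrib_left mult.assoc)
    also have "\<dots> = ps_mult d f (ps_mult d g h) m"
      by (simp add: ps_mult_apply[OF m] A_def)
    finally show ?thesis .
  qed
qed

lemma ps_mult_add_left: "ps_mult d (f + g) h = ps_mult d f h + ps_mult d g h"
  by (simp add: ps_mult_def fun_eq_iff sum.distrib distrib_right)

lemma ps_mult_monom_apply:
  "ps_mult d (ps_monom c) f m = (if m \<in> exps d \<and> c \<le> m then f (m - c) else 0)"
proof (cases "m \<in> exps d")
  case True
  have "(\<Sum>a | a \<le> m. ps_monom c a * f (m - a)) = (\<Sum>a | a \<le> m. if c = a then f (m - c) else 0)"
    by (rule sum.cong) (auto simp: ps_monom_def)
  thus ?thesis using True finite_exps_le[OF True] by (simp add: ps_mult_apply)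
qed (simp add: ps_mult_def)

lemma ps_mult_one: "f \<in> carrier (PS d) \<Longrightarrow> ps_mult d (ps_monom 0) f = f"
  by (auto simp: fun_eq_iff ps_mult_monom_apply carrier_PS le_fun_def)

lemma ps_monom_mult_monom:
  assumes "a \<in> exps d" "b \<in> exps d" shows "ps_mult d (ps_monom a) (ps_monom b) = ps_monom (a + b)"
proof (rule ext)
  fix m
  have "m \<in> exps d" if "m = a + b" using that assms by (simp add: exps_add)
  moreover have "(a \<le> m \<and> m - a = b) \<longleftrightarrow> m = a + b"
    using le_add_diff_inverse_exp[of a m] by (auto simp: le_fun_def)
  ultimately show "ps_mult d (ps_monom a) (ps_monom b) m = ps_monom (a + b) m"
    unfolding ps_mult_monom_apply by (auto simp: ps_monom_def)
qed

definition ps_div_monom :: "nat \<Rightarrow> (nat \<Rightarrow> nat) \<Rightarrow> ('k::field) mps \<Rightarrow> 'k mps" where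
  "ps_div_monom d c f = (\<lambda>m. if m \<in> exps d then f (m + c) else 0)"

lemma ps_div_monom_in_carrier: "ps_div_monom d c f \<in> carrier (PS d)"
  by (simp add: carrier_PS ps_div_monom_def)

lemma ps_mult_monom_div_monom:
  assumes "f \<in> carrier (PS d)" "\<And>a. f a \<noteq> 0 \<Longrightarrow> c \<le> a"
  shows "ps_mult d (ps_monom c) (ps_div_monom d c f) = f"
proof (rule ext)
  fix m
  show "ps_mult d (ps_monom c) (ps_div_monom d c f) m = f m"
  proof (cases "m \<in> exps d \<and> c \<le> m")
    case True thus ?thesis
      by (simp add: ps_mult_monom_apply ps_div_monom_def exps_diff le_add_diff_inverse2_exp)
  next
    case False thus ?thesis using assms by (auto simp: ps_mult_monom_apply carrier_PS)
  qed
qed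

text \<open>The graded lexicographically least exponents of two nonzero power series add up to that
  of their product, so the power series ring is a domain.\<close>

lemma exists_glex_least_exp:
  assumes "f \<in> carrier (PS d)" "f \<noteq> 0"
  obtains m where "f m \<noteq> 0" "\<And>a. f a \<noteq> 0 \<Longrightarrow> a \<noteq> m \<Longrightarrow> glex_less d m a"
proof -
  obtain a0 where a0: "f a0 \<noteq> 0" using assms(2) by (auto simp: fun_eq_iff)
  define D where "D = (LEAST D. \<exists>a. f a \<noteq> 0 \<and> mdeg d a = D)"
  have "\<exists>a. f a \<noteq> 0 \<and> mdeg d a = D"
    unfolding D_def by (rule LeastI[of _ "mdeg d a0"]) (use a0 in blast)
  have D_le: "D \<le> mdeg d a" if "f a \<noteq> 0" for a
    unfolding D_def using that by (blast intro: Least_le)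
  define M where "M = {a. f a \<noteq> 0 \<and> mdeg d a = D}"
  have "M \<subseteq> {a \<in> exps d. mdeg d a = D}" using assms(1) by (auto simp: M_def carrier_PS)
  hence "finite M" "M \<subseteq> exps d" using finite_exps_mdeg finite_subset by blast+
  moreover have "M \<noteq> {}" using \<open>\<exists>a. f a \<noteq> 0 \<and> mdeg d a = D\<close> by (simp add: M_def)
  ultimately obtain m where m: "m \<in> M" "\<forall>a\<in>M. a \<noteq> m \<longrightarrow> lex_less d m a"
    using exists_lex_least by blast
  have "glex_less d m a" if "f a \<noteq> 0" "a \<noteq> m" for a
    using m D_le[OF that(1)] that by (auto simp: glex_less_def M_def)
  moreover have "f m \<noteq> 0" using m(1) by (simp add: M_def)
  ultimately show thesis using that by blast
qed

lemma ps_mult_at_glex_least: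
  assumes "f \<in> carrier (PS d)" "f ma \<noteq> 0" "\<And>a. f a \<noteq> 0 \<Longrightarrow> a \<noteq> ma \<Longrightarrow> glex_less d ma a"
    and "g \<in> carrier (PS d)" "g mb \<noteq> 0" "\<And>b. g b \<noteq> 0 \<Longrightarrow> b \<noteq> mb \<Longrightarrow> glex_less d mb b"
  shows "ps_mult d f g (ma + mb) = f ma * g mb"
proof -
  have m: "ma + mb \<in> exps d" using assms by (auto simp: carrier_PS intro: exps_add)
  have "f a * g (ma + mb - a) = 0" if "a \<le> ma + mb" "a \<noteq> ma" for a
  proof (rule ccontr)
    assume "f a * g (ma + mb - a) \<noteq> 0"
    hence fa: "f a \<noteq> 0" and gb: "g (ma + mb - a) \<noteq> 0" by auto
    have "glex_less d (ma + mb) (a + (ma + mb - a))"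
      using glex_less_add[of a ma d "ma + mb - a" mb] assms(3,6) fa gb that(2) by blast
    thus False using le_add_diff_inverse_exp[OF that(1)] glex_less_irrefl by metis
  qed
  hence "(\<Sum>a | a \<le> ma + mb. f a * g (ma + mb - a)) = (\<Sum>a | a \<le> ma + mb. if a = ma then f ma * g mb else 0)"
    by (intro sum.cong) auto
  thus ?thesis using finite_exps_le[OF m] by (simp add: ps_mult_apply[OF m] le_fun_def)
qed

lemma ps_mult_nonzero:
  assumes "f \<in> carrier (PS d)" "f \<noteq> 0" "g \<in> carrier (PS d)" "g \<noteq> 0"
  shows "ps_mult d f g \<noteq> 0"
proof -
  obtain ma where "f ma \<noteq> 0" "\<And>a. f a \<noteq> 0 \<Longrightarrow> a \<noteq> ma \<Longrightarrow> glex_less d ma a"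
    using exists_glex_least_exp[OF assms(1,2)] by blast
  moreover obtain mb where "g mb \<noteq> 0" "\<And>b. g b \<noteq> 0 \<Longrightarrow> b \<noteq> mb \<Longrightarrow> glex_less d mb b"
    using exists_glex_least_exp[OF assms(3,4)] by blast
  ultimately have "ps_mult d f g (ma + mb) \<noteq> 0"
    using ps_mult_at_glex_least[OF assms(1) _ _ assms(3)] by simp
  thus ?thesis by auto
qed

section \<open>The Veronese ring\<close>

lemma carrier_Veronese:
  "carrier (Veronese d n) = {f \<in> carrier (PS d). \<forall>a. f a \<noteq> 0 \<longrightarrow> n dvd mdeg d a}"
  by (simp add: Veronese_def)

lemma mult_Veronese: "f \<otimes>\<^bsub>Veronese d n\<^esub> g = ps_mult d f g"
  by (simp add: Veronese_def mult_PS)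

lemma add_Veronese: "f \<oplus>\<^bsub>Veronese d n\<^esub> g = f + g"
  by (simp add: Veronese_def add_PS)

lemma zero_Veronese: "\<zero>\<^bsub>Veronese d n\<^esub> = 0"
  by (simp add: Veronese_def zero_PS)

lemma one_Veronese: "\<one>\<^bsub>Veronese d n\<^esub> = ps_monom 0"
  by (simp add: Veronese_def one_PS)

lemma ps_mult_in_Veronese:
  assumes "f \<in> carrier (Veronese d n)" "g \<in> carrier (Veronese d n)"
  shows "ps_mult d f g \<in> carrier (Veronese d n)"
proof -
  have "n dvd mdeg d m" if "ps_mult d f g m \<noteq> 0" for m
  proof -
    obtain a where "a \<le> m" "f a \<noteq> 0" "g (m - a) \<noteq> 0"
      using ps_mult_nonzeroE[OF \<open>ps_mult d f g m \<noteq> 0\<close>] by blast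
    thus ?thesis using assms by (auto simp: carrier_Veronese mdeg_diff[of a m])
  qed
  thus ?thesis by (simp add: carrier_Veronese ps_mult_in_carrier)
qed

lemma ps_monom_in_Veronese: "c \<in> exps d \<Longrightarrow> n dvd mdeg d c \<Longrightarrow> ps_monom c \<in> carrier (Veronese d n)"
  by (simp add: carrier_Veronese ps_monom_in_carrier) (simp add: ps_monom_def)

lemma cring_Veronese: "cring (Veronese d n :: ('k::field) mps ring)"
proof (rule cringI)
  show "abelian_group (Veronese d n :: 'k mps ring)"
  proof (rule abelian_groupI, unfold add_Veronese zero_Veronese)
    fix x y :: "'k mps"
    assume "x \<in> carrier (Veronese d n)" "y \<in> carrier (Veronese d n)"
    thus "x + y \<in> carrier (Veronese d n)"
      by (auto simp: carrier_Veronese carrier_PS) (metis add.right_neutral)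
  next
    show "0 \<in> carrier (Veronese d n :: 'k mps ring)" by (simp add: carrier_Veronese carrier_PS)
  next
    fix x y z :: "'k mps"
    show "x + y + z = x + (y + z)" by (rule add.assoc)
    show "x + y = y + x" by (rule add.commute)
    show "0 + x = x" by (rule add_0)
  next
    fix x :: "'k mps" assume "x \<in> carrier (Veronese d n)"
    hence "- x \<in> carrier (Veronese d n)" by (simp add: carrier_Veronese carrier_PS)
    thus "\<exists>y\<in>carrier (Veronese d n). y + x = 0" by (intro bexI[of _ "- x"]) simp_all
  qed
next
  show "comm_monoid (Veronese d n :: 'k mps ring)"
  proof (rule comm_monoidI, unfold mult_Veronese one_Veronese)
    fix x y z :: "'k mps"
    assume "x \<in> carrier (Veronese d n)" "y \<in> carrier (Veronese d n)"
    thus "ps_mult d x y \<in> carrier (Veronese d n)" by (rule ps_mult_in_Veronese)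
    show "ps_mult d (ps_mult d x y) z = ps_mult d x (ps_mult d y z)" by (rule ps_mult_assoc)
    show "ps_mult d x y = ps_mult d y x" by (rule ps_mult_commute)
  next
    show "ps_monom 0 \<in> carrier (Veronese d n :: 'k mps ring)"
      by (rule ps_monom_in_Veronese) (simp_all add: exps_def mdeg_def)
  next
    fix x :: "'k mps" assume "x \<in> carrier (Veronese d n)"
    thus "ps_mult d (ps_monom 0) x = x" by (simp add: carrier_Veronese ps_mult_one)
  qed
qed (simp add: mult_Veronese add_Veronese ps_mult_add_left)

lemma Veronese_idealI:
  fixes I :: "('k::field) mps set"
  assumes "I \<subseteq> carrier (Veronese d n)" "0 \<in> I" "\<And>f g. f \<in> I \<Longrightarrow> g \<in> I \<Longrightarrow> f + g \<in> I"
    and "\<And>f. f \<in> I \<Longrightarrow> - f \<in> I"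
    and "\<And>f r. f \<in> I \<Longrightarrow> r \<in> carrier (Veronese d n) \<Longrightarrow> ps_mult d r f \<in> I"
  shows "ideal I (Veronese d n)"
proof -
  interpret R: cring "Veronese d n :: 'k mps ring" by (rule cring_Veronese)
  have a_inv: "\<ominus>\<^bsub>Veronese d n\<^esub> f = - f" if "f \<in> carrier (Veronese d n)" for f :: "'k mps"
  proof (rule R.minus_equality)
    show "- f \<oplus>\<^bsub>Veronese d n\<^esub> f = \<zero>\<^bsub>Veronese d n\<^esub>" by (simp add: add_Veronese zero_Veronese)
    show "- f \<in> carrier (Veronese d n)" using that by (simp add: carrier_Veronese carrier_PS)
  qed (rule that)
  show ?thesis
  proof (rule idealI)
    show "ring (Veronese d n :: 'k mps ring)" by (rule R.ring_axioms)
    show "subgroup I (add_monoid (Veronese d n))"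
    proof (rule R.add.subgroupI)
      show "I \<subseteq> carrier (Veronese d n :: 'k mps ring)" by (rule assms(1))
      show "I \<noteq> {}" using assms(2) by auto
    next
      fix f assume "f \<in> I"
      moreover have "f \<in> carrier (Veronese d n)" using assms(1) \<open>f \<in> I\<close> by blast
      ultimately show "\<ominus>\<^bsub>(Veronese d n :: 'k mps ring)\<^esub> f \<in> I" by (simp add: a_inv assms(4))
    next
      fix f g assume "f \<in> I" "g \<in> I"
      thus "f \<oplus>\<^bsub>(Veronese d n :: 'k mps ring)\<^esub> g \<in> I" using assms(3) by (simp add: add_Veronese)
    qed
  next
    fix f r assume "f \<in> I" "r \<in> carrier (Veronese d n :: 'k mps ring)"
    thus "r \<otimes>\<^bsub>Veronese d n\<^esub> f \<in> I" "f \<otimes>\<^bsub>Veronese d n\<^esub> r \<in> I"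
      using assms(5) by (simp_all add: mult_Veronese ps_mult_commute[of d f r])
  qed
qed

section \<open>The symbolic powers of \<open>L\<close>\<close>

definition x1_order_ideal :: "nat \<Rightarrow> nat \<Rightarrow> nat \<Rightarrow> ('k::field) mps set" where
  "x1_order_ideal d n i = {f \<in> carrier (Veronese d n). \<forall>a. f a \<noteq> 0 \<longrightarrow> i \<le> a 0}"

lemma x1_order_ideal_0: "x1_order_ideal d n 0 = carrier (Veronese d n)"
  by (simp add: x1_order_ideal_def)

lemma ps_monom_in_x1_order_ideal:
  "c \<in> exps d \<Longrightarrow> n dvd mdeg d c \<Longrightarrow> i \<le> c 0 \<Longrightarrow> ps_monom c \<in> x1_order_ideal d n i"
  by (simp add: x1_order_ideal_def ps_monom_in_Veronese) (simp add: ps_monom_def)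

lemma ps_mult_in_x1_order_ideal:
  assumes "f \<in> x1_order_ideal d n k" "g \<in> x1_order_ideal d n l"
  shows "ps_mult d f g \<in> x1_order_ideal d n (k + l)"
proof -
  have "k + l \<le> m 0" if "ps_mult d f g m \<noteq> 0" for m
  proof -
    obtain a where "a \<le> m" "f a \<noteq> 0" "g (m - a) \<noteq> 0"
      using ps_mult_nonzeroE[OF \<open>ps_mult d f g m \<noteq> 0\<close>] by blast
    hence "k \<le> a 0" "l \<le> (m - a) 0" "a 0 \<le> m 0"
      using assms by (auto simp: x1_order_ideal_def le_fun_def)
    thus ?thesis by simp
  qed
  thus ?thesis using assms by (simp add: x1_order_ideal_def ps_mult_in_Veronese)
qed

lemma ideal_x1_order_ideal: "ideal (x1_order_ideal d n i) (Veronese d n :: ('k::field) mps ring)"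
proof (rule Veronese_idealI)
  fix f g :: "'k mps"
  assume "f \<in> x1_order_ideal d n i" "g \<in> x1_order_ideal d n i"
  thus "f + g \<in> x1_order_ideal d n i"
    by (auto simp: x1_order_ideal_def carrier_Veronese carrier_PS) (metis add.right_neutral)+
next
  fix f r :: "'k mps"
  assume "f \<in> x1_order_ideal d n i" "r \<in> carrier (Veronese d n)"
  thus "ps_mult d r f \<in> x1_order_ideal d n i"
    using ps_mult_in_x1_order_ideal[of r d n 0 f i] by (simp add: x1_order_ideal_0)
qed (auto simp: x1_order_ideal_def carrier_Veronese carrier_PS)

lemma var1_eq: "var1 = ps_monom (var_exp 0 1)"
  unfolding var1_def ps_monom_def var_exp_def ..

lemma Lideal_eq: "Lideal d n = (x1_order_ideal d n 1 :: ('k::field) mps set)"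
proof -
  have "f \<in> {ps_mult d (ps_monom (var_exp 0 1)) s |s. s \<in> carrier (PS d)} \<longleftrightarrow>
        f \<in> carrier (PS d) \<and> (\<forall>a. f a \<noteq> 0 \<longrightarrow> 1 \<le> a 0)" for f :: "'k mps"
  proof
    assume "f \<in> {ps_mult d (ps_monom (var_exp 0 1)) s |s. s \<in> carrier (PS d)}"
    thus "f \<in> carrier (PS d) \<and> (\<forall>a. f a \<noteq> 0 \<longrightarrow> 1 \<le> a 0)"
      by (auto simp: ps_mult_in_carrier ps_mult_monom_apply var_exp_le_iff split: if_splits)
  next
    assume f: "f \<in> carrier (PS d) \<and> (\<forall>a. f a \<noteq> 0 \<longrightarrow> 1 \<le> a 0)"
    hence "f = ps_mult d (ps_monom (var_exp 0 1)) (ps_div_monom d (var_exp 0 1) f)"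
      by (simp add: ps_mult_monom_div_monom var_exp_le_iff)
    thus "f \<in> {ps_mult d (ps_monom (var_exp 0 1)) s |s. s \<in> carrier (PS d)}"
      using ps_div_monom_in_carrier by blast
  qed
  thus ?thesis
    by (auto simp: Lideal_def x1_order_ideal_def mult_PS var1_eq carrier_Veronese)
qed

lemma ideal_pow_0: "ideal_pow R I 0 = carrier R"
  by (simp add: ideal_pow_def)

lemma ideal_pow_Suc: "ideal_pow R I (Suc k) = ideal_prod R (ideal_pow R I k) I"
  by (simp add: ideal_pow_def)

lemma ideal_pow_Lideal_subset:
  "ideal_pow (Veronese d n) (Lideal d n) k \<subseteq> (x1_order_ideal d n k :: ('k::field) mps set)"
proof (induction k)
  case 0 show ?case by (simp add: ideal_pow_0 x1_order_ideal_0)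
next
  case (Suc k)
  have "f \<in> x1_order_ideal d n (Suc k)"
    if "f \<in> ideal_prod (Veronese d n) (ideal_pow (Veronese d n) (Lideal d n) k) (Lideal d n)"
    for f :: "'k mps"
    using that
  proof (induction rule: ideal_prod.induct)
    case (prod g h)
    thus ?case using Suc ps_mult_in_x1_order_ideal[of g d n k h 1] Lideal_eq
      by (auto simp: mult_Veronese)
  next
    case (sum g h)
    from sum(3,4) show ?case
      by (rule additive_subgroup.a_closed[OF ideal.axioms(1)[OF ideal_x1_order_ideal]])
  qed
  thus ?case by (auto simp: ideal_pow_Suc)
qed

lemma ps_monom_x1_x2_in_Lideal:
  assumes "2 \<le> d" "0 < n"
  shows "ps_monom (var_exp 0 1 + var_exp 1 (n - 1)) \<in> (Lideal d n :: ('k::field) mps set)"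
proof -
  have "var_exp 0 1 + var_exp 1 (n - 1) \<in> exps d" using assms by (simp add: exps_add var_exp_in_exps)
  moreover have "mdeg d (var_exp 0 1 + var_exp 1 (n - 1)) = n"
    using assms by (simp add: mdeg_add mdeg_var_exp)
  ultimately show ?thesis using assms by (simp add: Lideal_eq ps_monom_in_x1_order_ideal)
qed

lemma ps_mult_monom_in_Lideal_pow:
  assumes "2 \<le> d" "0 < n" "v \<in> carrier (Veronese d n)"
  shows "ps_mult d (ps_monom (var_exp 0 k + var_exp 1 ((n - 1) * k))) v
    \<in> ideal_pow (Veronese d n) (Lideal d n :: ('k::field) mps set) k"
proof (induction k)
  case 0
  have "ps_mult d (ps_monom 0) v = v" using assms(3) by (simp add: carrier_Veronese ps_mult_one)
  thus ?case using assms(3) by (simp only: ideal_pow_0 mult_0_right var_exp_0 add_0)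
next
  case (Suc k)
  let ?x = "\<lambda>k. ps_monom (var_exp 0 k + var_exp 1 ((n - 1) * k)) :: 'k mps"
  have exps: "var_exp 0 k + var_exp 1 ((n - 1) * k) \<in> exps d" for k
    using assms(1) by (simp add: exps_add var_exp_in_exps)
  have "(var_exp 0 k + var_exp 1 ((n - 1) * k)) + (var_exp 0 1 + var_exp 1 ((n - 1) * 1))
      = var_exp 0 (Suc k) + var_exp 1 ((n - 1) * Suc k)"
    by (simp add: fun_eq_iff)
  hence "ps_mult d (?x (Suc k)) v = ps_mult d (ps_mult d (?x k) (?x 1)) v"
    by (simp only: ps_monom_mult_monom[OF exps exps])
  also have "\<dots> = ps_mult d (ps_mult d (?x k) v) (?x 1)"
    by (simp only: ps_mult_assoc ps_mult_commute[of d v])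
  finally have eq: "ps_mult d (?x (Suc k)) v = ps_mult d (ps_mult d (?x k) v) (?x 1)" .
  have "?x 1 \<in> Lideal d n" using ps_monom_x1_x2_in_Lideal[OF assms(1,2)] by simp
  with Suc.IH have "ps_mult d (?x k) v \<otimes>\<^bsub>Veronese d n\<^esub> ?x 1
      \<in> ideal_prod (Veronese d n) (ideal_pow (Veronese d n) (Lideal d n) k) (Lideal d n)"
    by (rule ideal_prod.prod)
  thus ?case by (simp only: eq mult_Veronese ideal_pow_Suc)
qed

definition x1_component :: "nat \<Rightarrow> ('k::field) mps \<Rightarrow> 'k mps" where
  "x1_component j f = (\<lambda>a. if a 0 = j then f a else 0)"

lemma x1_component_ps_mult:
  assumes "\<And>a. r a \<noteq> 0 \<Longrightarrow> j \<le> a 0"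
  shows "x1_component j (ps_mult d s r) = ps_mult d (x1_component 0 s) (x1_component j r)"
proof (rule ext)
  fix m
  show "x1_component j (ps_mult d s r) m = ps_mult d (x1_component 0 s) (x1_component j r) m"
  proof (cases "m \<in> exps d \<and> m 0 = j")
    case True
    have "s a * r (m - a) = x1_component 0 s a * x1_component j r (m - a)" if "a \<le> m" for a
    proof (cases "a 0 = 0")
      case False
      moreover have "a 0 \<le> m 0" using that by (simp add: le_fun_def)
      ultimately have "(m - a) 0 < j" using True by simp
      thus ?thesis using assms[of "m - a"] False by (auto simp: x1_component_def)
    qed (simp add: x1_component_def True)
    thus ?thesis using True by (simp add: x1_component_def ps_mult_apply)
  next
    case False
    hence "x1_component 0 s a * x1_component j r (m - a) = 0" if "a \<le> m" "m \<in> exps d" for a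
      using that by (simp add: x1_component_def)
    thus ?thesis using False by (auto simp: x1_component_def ps_mult_def intro!: sum.neutral)
  qed
qed

text \<open>Compare the lowest \<open>x\<^sub>1\<close>-components: that of \<open>s r\<close> is the product of the nonzero
  \<open>x\<^sub>1\<close>-free part of \<open>s\<close> with the lowest component of \<open>r\<close>.\<close>

lemma x1_order_cancel:
  assumes "r \<in> carrier (Veronese d n)" "s \<in> carrier (Veronese d n)"
    and "s \<notin> x1_order_ideal d n 1" "ps_mult d s r \<in> x1_order_ideal d n i"
  shows "r \<in> x1_order_ideal d n i"
proof (rule ccontr)
  assume "r \<notin> x1_order_ideal d n i"
  then obtain a0 where a0: "r a0 \<noteq> 0" "a0 0 < i" using assms(1) by (auto simp: x1_order_ideal_def)
  define j where "j = (LEAST j. \<exists>a. r a \<noteq> 0 \<and> a 0 = j)"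
  obtain aj where aj: "r aj \<noteq> 0" "aj 0 = j"
    using LeastI[of "\<lambda>j. \<exists>a. r a \<noteq> 0 \<and> a 0 = j" "a0 0"] a0(1) unfolding j_def by blast
  have j_le: "j \<le> a 0" if "r a \<noteq> 0" for a
    unfolding j_def using that by (blast intro: Least_le)
  obtain b where b: "s b \<noteq> 0" "b 0 = 0" using assms(2,3) by (auto simp: x1_order_ideal_def)
  have "x1_component 0 s \<noteq> 0" using b by (auto simp: x1_component_def fun_eq_iff)
  moreover have "x1_component j r \<noteq> 0" using aj by (auto simp: x1_component_def fun_eq_iff)
  ultimately have "ps_mult d (x1_component 0 s) (x1_component j r) \<noteq> 0"
    using assms(1,2) by (intro ps_mult_nonzero) (auto simp: carrier_Veronese carrier_PS x1_component_def)
  moreover have "x1_component j (ps_mult d s r) = ps_mult d (x1_component 0 s) (x1_component j r)"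
    by (rule x1_component_ps_mult) (rule j_le)
  ultimately obtain m where "x1_component j (ps_mult d s r) m \<noteq> 0"
    by (auto simp: fun_eq_iff)
  hence "ps_mult d s r m \<noteq> 0" "m 0 = j" by (auto simp: x1_component_def split: if_splits)
  moreover have "j < i" using j_le[OF a0(1)] a0(2) by simp
  ultimately show False using assms(4) by (auto simp: x1_order_ideal_def)
qed

text \<open>For \<open>r\<close> of \<open>x\<^sub>1\<close>-order at least \<open>i\<close>,
  \<open>x\<^sub>2\<^bsup>ni\<^esup> r = (x\<^sub>1 x\<^sub>2\<^bsup>n-1\<^esup>)\<^bsup>i\<^esup> \<cdot> x\<^sub>2\<^bsup>i\<^esup> (r / x\<^sub>1\<^bsup>i\<^esup>)\<close>,
  and the last factor lies in the Veronese ring.\<close>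

lemma x2_power_mult_in_Lideal_pow:
  assumes "2 \<le> d" "0 < n" "r \<in> x1_order_ideal d n i"
  shows "ps_mult d (ps_monom (var_exp 1 (n * i))) r
    \<in> ideal_pow (Veronese d n) (Lideal d n :: ('k::field) mps set) i"
proof -
  let ?t = "ps_div_monom d (var_exp 0 i) r"
  define u where "u = ps_mult d (ps_monom (var_exp 1 i)) ?t"
  have r: "r \<in> carrier (PS d)" "\<And>a. r a \<noteq> 0 \<Longrightarrow> n dvd mdeg d a" "\<And>a. r a \<noteq> 0 \<Longrightarrow> i \<le> a 0"
    using assms(3) by (auto simp: x1_order_ideal_def carrier_Veronese)
  have exps: "var_exp j k \<in> exps d" if "j \<le> 1" for j k
    using assms(1) that by (simp add: var_exp_in_exps)
  have "n dvd mdeg d m" if "u m \<noteq> 0" for m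
  proof -
    have m: "m \<in> exps d" "var_exp 1 i \<le> m" "r (m - var_exp 1 i + var_exp 0 i) \<noteq> 0"
      using that by (auto simp: u_def ps_mult_monom_apply ps_div_monom_def split: if_splits)
    have "mdeg d (m - var_exp 1 i + var_exp 0 i) = mdeg d m"
      using mdeg_diff[OF m(2)] assms(1) by (simp add: mdeg_add mdeg_var_exp)
    thus ?thesis using r(2)[OF m(3)] by simp
  qed
  hence u: "u \<in> carrier (Veronese d n)"
    by (simp add: carrier_Veronese u_def ps_mult_in_carrier)
  have r_eq: "ps_mult d (ps_monom (var_exp 0 i)) ?t = r"
    using r(1,3) by (simp add: ps_mult_monom_div_monom var_exp_le_iff)
  have "var_exp 1 (n * i) + var_exp 0 i = (var_exp 0 i + var_exp 1 ((n - 1) * i)) + var_exp 1 i"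
    using assms(2) by (simp add: fun_eq_iff algebra_simps)
  hence "ps_mult d (ps_monom (var_exp 1 (n * i))) (ps_mult d (ps_monom (var_exp 0 i)) ?t)
      = ps_mult d (ps_monom (var_exp 0 i + var_exp 1 ((n - 1) * i))) u"
    by (simp only: u_def ps_mult_assoc[symmetric] ps_monom_mult_monom exps exps_add order.refl
        zero_le_one)
  hence "ps_mult d (ps_monom (var_exp 1 (n * i))) r
      = ps_mult d (ps_monom (var_exp 0 i + var_exp 1 ((n - 1) * i))) u"
    by (simp only: r_eq)
  thus ?thesis using ps_mult_monom_in_Lideal_pow[OF assms(1,2) u] by simp
qed

lemma symbolic_power_Lideal:
  assumes "2 \<le> d" "0 < n"
  shows "symbolic_power (Veronese d n) (Lideal d n) i = (x1_order_ideal d n i :: ('k::field) mps set)"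
proof (intro equalityI subsetI)
  fix r :: "'k mps" assume "r \<in> symbolic_power (Veronese d n) (Lideal d n) i"
  then obtain s where r: "r \<in> carrier (Veronese d n)"
    and s: "s \<in> carrier (Veronese d n)" "s \<notin> Lideal d n"
    and sr: "ps_mult d s r \<in> ideal_pow (Veronese d n) (Lideal d n) i"
    unfolding symbolic_power_def mult_Veronese by blast
  have "ps_mult d s r \<in> x1_order_ideal d n i"
    using ideal_pow_Lideal_subset sr by (rule subsetD)
  thus "r \<in> x1_order_ideal d n i"
    using x1_order_cancel[OF r s(1)] s(2) by (simp add: Lideal_eq)
next
  fix r :: "'k mps" assume r: "r \<in> x1_order_ideal d n i"
  let ?s = "ps_monom (var_exp 1 (n * i)) :: 'k mps"
  have "?s \<in> carrier (Veronese d n)"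
    using assms(1) by (simp add: ps_monom_in_Veronese var_exp_in_exps mdeg_var_exp)
  moreover have "?s \<notin> Lideal d n"
  proof
    assume "?s \<in> Lideal d n"
    hence "?s (var_exp 1 (n * i)) \<noteq> 0 \<longrightarrow> 1 \<le> var_exp 1 (n * i) 0"
      unfolding Lideal_eq x1_order_ideal_def by blast
    thus False by (simp add: ps_monom_def)
  qed
  moreover have "r \<in> carrier (Veronese d n)" using r by (simp add: x1_order_ideal_def)
  ultimately show "r \<in> symbolic_power (Veronese d n) (Lideal d n) i"
    using x2_power_mult_in_Lideal_pow[OF assms r] unfolding symbolic_power_def mult_Veronese by blast
qed

section \<open>Monomial generators\<close>

definition gen_exps :: "nat \<Rightarrow> nat \<Rightarrow> nat \<Rightarrow> (nat \<Rightarrow> nat) set" where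
  "gen_exps d n i = {c \<in> exps d. mdeg d c = n \<and> i \<le> c 0}"

lemma finite_gen_exps: "finite (gen_exps d n i)"
  using finite_exps_mdeg[of d n] by (rule finite_subset[rotated]) (auto simp: gen_exps_def)

lemma card_gen_exps:
  assumes "0 < d" "i \<le> n"
  shows "card (gen_exps d n i) = (n - i + d - 1) choose (d - 1)"
proof -
  let ?x1 = "var_exp 0 i"
  have "bij_betw (\<lambda>b. b + ?x1) {b \<in> exps d. mdeg d b = n - i} (gen_exps d n i)"
  proof (rule bij_betw_byWitness[where f' = "\<lambda>c. c - ?x1"])
    show "\<forall>b\<in>{b \<in> exps d. mdeg d b = n - i}. b + ?x1 - ?x1 = b" by simp
    show "\<forall>c\<in>gen_exps d n i. c - ?x1 + ?x1 = c"
      by (simp add: gen_exps_def le_add_diff_inverse2_exp var_exp_le_iff)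
    show "(\<lambda>b. b + ?x1) ` {b \<in> exps d. mdeg d b = n - i} \<subseteq> gen_exps d n i"
      using assms by (auto simp: gen_exps_def exps_add var_exp_in_exps mdeg_add mdeg_var_exp)
    show "(\<lambda>c. c - ?x1) ` gen_exps d n i \<subseteq> {b \<in> exps d. mdeg d b = n - i}"
      using assms mdeg_diff[of ?x1 _ d]
      by (auto simp: gen_exps_def exps_diff var_exp_le_iff mdeg_var_exp)
  qed
  hence "card (gen_exps d n i) = card {b \<in> exps d. mdeg d b = n - i}"
    by (simp add: bij_betw_same_card)
  also have "\<dots> = (n - i + d - 1) choose (n - i)" by (simp add: card_exps_mdeg add.commute)
  also have "\<dots> = (n - i + d - 1) choose (d - 1)"
    using assms(1) binomial_symmetric[of "n - i" "n - i + d - 1"] by simp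
  finally show ?thesis .
qed

lemma ps_monom_gen_exp_in_x1_order_ideal:
  "c \<in> gen_exps d n i \<Longrightarrow> ps_monom c \<in> x1_order_ideal d n i"
  by (simp add: gen_exps_def ps_monom_in_x1_order_ideal)

lemma exists_gen_exp_le:
  assumes "0 < d" "0 < i" "i \<le> n" "m \<in> exps d" "n dvd mdeg d m" "i \<le> m 0"
  shows "\<exists>c\<in>gen_exps d n i. c \<le> m"
proof -
  have "0 < mdeg d m" using component_le_mdeg[OF assms(1), of m] assms(2,6) by simp
  hence "n \<le> mdeg d m" using assms(5) by (simp add: dvd_imp_le)
  have x1: "var_exp 0 i \<le> m" using assms(6) by (simp add: var_exp_le_iff)
  hence "n - i \<le> mdeg d (m - var_exp 0 i)"
    using mdeg_diff[OF x1] \<open>n \<le> mdeg d m\<close> assms(1) by (simp add: mdeg_var_exp)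
  then obtain b where b: "b \<le> m - var_exp 0 i" "mdeg d b = n - i" using exists_le_mdeg_eq by blast
  have "var_exp 0 i + b \<in> gen_exps d n i"
    using assms exps_le[OF b(1) exps_diff[OF assms(4)]] b(2)
    by (simp add: gen_exps_def exps_add var_exp_in_exps mdeg_add mdeg_var_exp)
  moreover have "var_exp 0 i + b \<le> m"
  proof (rule le_funI)
    fix j
    have "b j \<le> m j - var_exp 0 i j" "var_exp 0 i j \<le> m j" using b(1) x1 by (simp_all add: le_fun_def)
    thus "(var_exp 0 i + b) j \<le> m j" by simp
  qed
  ultimately show ?thesis by blast
qed

text \<open>Each exponent of an element of \<open>x1_order_ideal\<close> is assigned one generator exponent
  dividing it; this splits the element into finitely many multiples of the generators.\<close>

definition gen_exp_below :: "nat \<Rightarrow> nat \<Rightarrow> nat \<Rightarrow> (nat \<Rightarrow> nat) \<Rightarrow> nat \<Rightarrow> nat" where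
  "gen_exp_below d n i m = (SOME c. c \<in> gen_exps d n i \<and> c \<le> m)"

definition gen_cofactor :: "nat \<Rightarrow> nat \<Rightarrow> nat \<Rightarrow> ('k::field) mps \<Rightarrow> (nat \<Rightarrow> nat) \<Rightarrow> 'k mps" where
  "gen_cofactor d n i f c =
     (\<lambda>x. if x \<in> exps d \<and> gen_exp_below d n i (x + c) = c then f (x + c) else 0)"

lemma gen_cofactor_in_Veronese:
  assumes "f \<in> carrier (Veronese d n)" "c \<in> gen_exps d n i"
  shows "gen_cofactor d n i f c \<in> carrier (Veronese d n)"
proof -
  have "n dvd mdeg d x" if "gen_cofactor d n i f c x \<noteq> 0" for x
  proof -
    have "f (x + c) \<noteq> 0" using that by (simp add: gen_cofactor_def split: if_splits)
    hence "n dvd mdeg d (x + c)" using assms(1) by (simp add: carrier_Veronese)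
    thus ?thesis using assms(2) by (simp add: gen_exps_def mdeg_add)
  qed
  thus ?thesis by (simp add: carrier_Veronese carrier_PS gen_cofactor_def)
qed

lemma ps_mult_monom_gen_cofactor:
  "ps_mult d (ps_monom c) (gen_cofactor d n i f c) m =
    (if m \<in> exps d \<and> c \<le> m \<and> gen_exp_below d n i m = c then f m else 0)"
  by (auto simp: ps_mult_monom_apply gen_cofactor_def exps_diff le_add_diff_inverse2_exp)

lemma sum_fun_apply: "(\<Sum>x\<in>A. f x) y = (\<Sum>x\<in>A. f x y)"
  by (induction A rule: infinite_finite_induct) simp_all

lemma x1_order_ideal_decomp:
  assumes "0 < d" "0 < i" "i \<le> n" "f \<in> x1_order_ideal d n i"
  shows "f = (\<Sum>c\<in>gen_exps d n i. ps_mult d (ps_monom c) (gen_cofactor d n i f c))"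
proof (rule ext)
  fix m
  have "(\<Sum>c\<in>gen_exps d n i. ps_mult d (ps_monom c) (gen_cofactor d n i f c) m) = f m"
  proof (cases "f m = 0")
    case True
    hence "ps_mult d (ps_monom c) (gen_cofactor d n i f c) m = 0" for c
      by (simp add: ps_mult_monom_gen_cofactor)
    thus ?thesis using True by simp
  next
    case False
    hence "m \<in> exps d" "n dvd mdeg d m" "i \<le> m 0"
      using assms(4) by (auto simp: x1_order_ideal_def carrier_Veronese carrier_PS)
    hence "\<exists>c. c \<in> gen_exps d n i \<and> c \<le> m" using exists_gen_exp_le[OF assms(1-3)] by blast
    hence g: "gen_exp_below d n i m \<in> gen_exps d n i \<and> gen_exp_below d n i m \<le> m"
      unfolding gen_exp_below_def by (rule someI_ex)
    hence "ps_mult d (ps_monom c) (gen_cofactor d n i f c) m =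
        (if c = gen_exp_below d n i m then f m else 0)" for c
      using \<open>m \<in> exps d\<close> by (auto simp: ps_mult_monom_gen_cofactor)
    thus ?thesis using g finite_gen_exps by simp
  qed
  thus "f m = (\<Sum>c\<in>gen_exps d n i. ps_mult d (ps_monom c) (gen_cofactor d n i f c)) m"
    by (simp add: sum_fun_apply)
qed

lemma sum_in_Veronese_ideal:
  fixes F :: "'a \<Rightarrow> ('k::field) mps"
  assumes "ideal I (Veronese d n)" "\<And>c. c \<in> A \<Longrightarrow> F c \<in> I"
  shows "(\<Sum>c\<in>A. F c) \<in> I"
  using assms(2)
proof (induction A rule: infinite_finite_induct)
  case (insert c A)
  hence "F c \<oplus>\<^bsub>Veronese d n\<^esub> (\<Sum>c\<in>A. F c) \<in> I"
    by (intro additive_subgroup.a_closed[OF ideal.axioms(1)[OF assms(1)]]) simp_all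
  thus ?case by (simp only: sum.insert[OF insert.hyps] add_Veronese)
qed (use additive_subgroup.zero_closed[OF ideal.axioms(1)[OF assms(1)]] in \<open>simp_all add: zero_Veronese\<close>)

lemma genideal_gen_exps:
  assumes "0 < d" "0 < i" "i \<le> n"
  shows "genideal (Veronese d n) (ps_monom ` gen_exps d n i) = (x1_order_ideal d n i :: ('k::field) mps set)"
proof -
  interpret R: cring "Veronese d n :: 'k mps ring" by (rule cring_Veronese)
  let ?G = "ps_monom ` gen_exps d n i :: 'k mps set"
  have G: "?G \<subseteq> x1_order_ideal d n i" using ps_monom_gen_exp_in_x1_order_ideal by blast
  hence G_carrier: "?G \<subseteq> carrier (Veronese d n)" by (auto simp: x1_order_ideal_def)
  show ?thesis
  proof
    show "genideal (Veronese d n) ?G \<subseteq> x1_order_ideal d n i"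
      using ideal_x1_order_ideal G by (rule R.genideal_minimal)
  next
    show "x1_order_ideal d n i \<subseteq> genideal (Veronese d n) ?G"
    proof
      fix f :: "'k mps" assume f: "f \<in> x1_order_ideal d n i"
      have "ps_mult d (ps_monom c) (gen_cofactor d n i f c) \<in> genideal (Veronese d n) ?G"
        if "c \<in> gen_exps d n i" for c
      proof -
        have "ps_monom c \<in> genideal (Veronese d n) ?G"
          using that R.genideal_self[OF G_carrier] by blast
        moreover have "gen_cofactor d n i f c \<in> carrier (Veronese d n)"
          using f that by (intro gen_cofactor_in_Veronese) (simp_all add: x1_order_ideal_def)
        ultimately show ?thesis
          using ideal.I_r_closed[OF R.genideal_ideal[OF G_carrier]] by (simp add: mult_Veronese)
      qed
      hence "(\<Sum>c\<in>gen_exps d n i. ps_mult d (ps_monom c) (gen_cofactor d n i f c))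
          \<in> genideal (Veronese d n) ?G"
        by (intro sum_in_Veronese_ideal[OF R.genideal_ideal[OF G_carrier]])
      thus "f \<in> genideal (Veronese d n) ?G" using x1_order_ideal_decomp[OF assms f] by simp
    qed
  qed
qed

section \<open>The minimal number of generators\<close>

text \<open>All monomials of \<open>x1_order_ideal\<close> other than the generators have degree greater
  than \<open>n\<close>.\<close>

lemma ps_mult_at_gen_exp:
  assumes "0 < d" "0 < i" "c \<in> gen_exps d n i" "f \<in> x1_order_ideal d n i"
  shows "ps_mult d r f c = r 0 * f c"
proof -
  have c: "c \<in> exps d" "mdeg d c = n" using assms(3) by (auto simp: gen_exps_def)
  have "r a * f (c - a) = 0" if "a \<le> c" "a \<noteq> 0" for a
  proof (rule ccontr)
    assume "r a * f (c - a) \<noteq> 0"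
    hence "n dvd mdeg d (c - a)" "i \<le> (c - a) 0"
      using assms(4) by (auto simp: x1_order_ideal_def carrier_Veronese)
    moreover have "(c - a) 0 \<le> mdeg d (c - a)" using assms(1) by (rule component_le_mdeg)
    ultimately have "n \<le> mdeg d (c - a)" using assms(2) by (simp add: dvd_imp_le)
    hence "mdeg d a = 0" using mdeg_diff[OF that(1)] c(2) by simp
    thus False using exps_mdeg_eq_0[OF exps_le[OF that(1) c(1)]] that(2) by simp
  qed
  hence "(\<Sum>a | a \<le> c. r a * f (c - a)) = (\<Sum>a | a \<le> c. if a = 0 then r 0 * f c else 0)"
    by (intro sum.cong) auto
  thus ?thesis using finite_exps_le[OF c(1)] by (simp add: ps_mult_apply[OF c(1)] le_fun_def)
qed

interpretation fun_vector_space: vector_space "\<lambda>(c::'k::field) (f::'a \<Rightarrow> 'k) x. c * f x"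
  by unfold_locales (simp_all add: fun_eq_iff algebra_simps)

lemma card_le_card_of_indicators_in_span:
  fixes S :: "('a \<Rightarrow> 'k::field) set"
  assumes "finite S" "(\<lambda>c x. if x = c then 1 else 0) ` C \<subseteq> fun_vector_space.span S"
  shows "card C \<le> card S"
proof -
  let ?\<delta> = "\<lambda>c x. if x = c then 1 else (0::'k)"
  have inj: "inj_on ?\<delta> C"
  proof (rule inj_onI)
    fix c c' :: 'a assume "?\<delta> c = ?\<delta> c'"
    from fun_cong[OF this, of c] show "c = c'" by (simp split: if_splits)
  qed
  have "fun_vector_space.independent (?\<delta> ` C)"
    unfolding fun_vector_space.independent_explicit_module
  proof (intro allI impI)
    fix t u v
    assume t: "finite t" "t \<subseteq> ?\<delta> ` C" "(\<Sum>v\<in>t. (\<lambda>x. u v * v x)) = 0" "v \<in> t"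
    then obtain c where c: "v = ?\<delta> c" by blast
    have "u w * w c = (if w = v then u v else 0)" if w: "w \<in> t" for w
    proof -
      obtain c' where c': "w = ?\<delta> c'" using w t(2) by blast
      show ?thesis
      proof (cases "c' = c")
        case True thus ?thesis using c c' by simp
      next
        case False
        hence "w c = 0" using c' by simp
        moreover have "v c = 1" using c by simp
        ultimately show ?thesis by auto
      qed
    qed
    hence "(\<Sum>w\<in>t. u w * w c) = u v" using t(1,4) by simp
    moreover have "(\<Sum>w\<in>t. u w * w c) = 0" using fun_cong[OF t(3), of c] by (simp add: sum_fun_apply)
    ultimately show "u v = 0" by simp
  qed
  from fun_vector_space.independent_span_bound[OF assms(1) this assms(2)]
  show ?thesis using card_image[OF inj] by simp
qed

definition coeffs_on :: "'a set \<Rightarrow> ('a \<Rightarrow> 'k::zero) \<Rightarrow> 'a \<Rightarrow> 'k" where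
  "coeffs_on C f = (\<lambda>c. if c \<in> C then f c else 0)"

lemma ideal_coeffs_on_gen_exps_in_span:
  fixes S :: "((nat \<Rightarrow> nat) \<Rightarrow> 'k::field) set"
  assumes "0 < d" "0 < i"
  shows "ideal {f \<in> x1_order_ideal d n i. coeffs_on (gen_exps d n i) f \<in> fun_vector_space.span S}
    (Veronese d n)"
    (is "ideal ?W _")
proof (rule Veronese_idealI)
  let ?c = "coeffs_on (gen_exps d n i)"
  show "?W \<subseteq> carrier (Veronese d n)" by (auto simp: x1_order_ideal_def)
  have "0 \<in> x1_order_ideal d n i"
    using additive_subgroup.zero_closed[OF ideal.axioms(1)[OF ideal_x1_order_ideal]]
    by (simp add: zero_Veronese)
  moreover have "?c 0 \<in> fun_vector_space.span S"
    using fun_vector_space.span_zero by (simp add: coeffs_on_def zero_fun_def)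
  ultimately show "0 \<in> ?W" by simp
next
  fix f g :: "'k mps" assume "f \<in> ?W" "g \<in> ?W"
  moreover have "coeffs_on (gen_exps d n i) (f + g) = coeffs_on (gen_exps d n i) f + coeffs_on (gen_exps d n i) g"
    by (simp add: coeffs_on_def fun_eq_iff)
  ultimately show "f + g \<in> ?W"
    using additive_subgroup.a_closed[OF ideal.axioms(1)[OF ideal_x1_order_ideal], of f d n i g]
    by (auto simp: add_Veronese intro: fun_vector_space.span_add)
next
  fix f :: "'k mps" assume "f \<in> ?W"
  moreover have "coeffs_on (gen_exps d n i) (- f) = - coeffs_on (gen_exps d n i) f"
    by (simp add: coeffs_on_def fun_eq_iff)
  ultimately show "- f \<in> ?W"
    by (auto simp: x1_order_ideal_def carrier_Veronese carrier_PS intro: fun_vector_space.span_neg)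
next
  fix f r :: "'k mps" assume f: "f \<in> ?W" and r: "r \<in> carrier (Veronese d n)"
  hence fQ: "f \<in> x1_order_ideal d n i" by simp
  have "coeffs_on (gen_exps d n i) (ps_mult d r f) = (\<lambda>x. r 0 * coeffs_on (gen_exps d n i) f x)"
    using ps_mult_at_gen_exp[OF assms _ fQ] by (simp add: coeffs_on_def fun_eq_iff)
  moreover have "ps_mult d r f \<in> x1_order_ideal d n i"
    using ps_mult_in_x1_order_ideal[of r d n 0 f i] r fQ by (simp add: x1_order_ideal_0)
  ultimately show "ps_mult d r f \<in> ?W" using f by (simp add: fun_vector_space.span_scale)
qed

text \<open>Nakayama's lemma in coordinates.\<close>

lemma coeffs_on_gen_exps_in_span:
  fixes H :: "('k::field) mps set"
  assumes "0 < d" "0 < i" "H \<subseteq> carrier (Veronese d n)"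
    and "genideal (Veronese d n) H = x1_order_ideal d n i" "f \<in> x1_order_ideal d n i"
  shows "coeffs_on (gen_exps d n i) f \<in> fun_vector_space.span (coeffs_on (gen_exps d n i) ` H)"
proof -
  interpret R: cring "Veronese d n :: 'k mps ring" by (rule cring_Veronese)
  let ?W = "{f \<in> x1_order_ideal d n i.
    coeffs_on (gen_exps d n i) f \<in> fun_vector_space.span (coeffs_on (gen_exps d n i) ` H)}"
  have "H \<subseteq> ?W"
    using R.genideal_self[OF assms(3)] assms(4) by (auto intro: fun_vector_space.span_base)
  hence "genideal (Veronese d n) H \<subseteq> ?W"
    using ideal_coeffs_on_gen_exps_in_span[OF assms(1,2)] by (rule R.genideal_minimal[rotated])
  thus ?thesis using assms(4,5) by auto
qed

lemma card_gen_exps_le_card_generators: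
  fixes H :: "('k::field) mps set"
  assumes "0 < d" "0 < i" "finite H" "H \<subseteq> carrier (Veronese d n)"
    and "genideal (Veronese d n) H = x1_order_ideal d n i"
  shows "card (gen_exps d n i) \<le> card H"
proof -
  let ?c = "coeffs_on (gen_exps d n i) :: 'k mps \<Rightarrow> 'k mps"
  have "(\<lambda>c x. if x = c then 1 else 0) ` gen_exps d n i \<subseteq> fun_vector_space.span (?c ` H)"
  proof
    fix v assume "v \<in> (\<lambda>c x. if x = c then (1::'k) else 0) ` gen_exps d n i"
    then obtain c where c: "c \<in> gen_exps d n i" "v = (\<lambda>x. if x = c then 1 else 0)" by blast
    hence "v = ?c (ps_monom c)" unfolding coeffs_on_def ps_monom_def by (intro ext) auto
    thus "v \<in> fun_vector_space.span (?c ` H)"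
      using coeffs_on_gen_exps_in_span[OF assms(1,2,4,5) ps_monom_gen_exp_in_x1_order_ideal[OF c(1)]]
      by simp
  qed
  hence "card (gen_exps d n i) \<le> card (?c ` H)"
    using assms(3) by (intro card_le_card_of_indicators_in_span) simp_all
  also have "\<dots> \<le> card H" using assms(3) by (rule card_image_le)
  finally show ?thesis .
qed

lemma min_gens_eqI:
  assumes "finite G" "G \<subseteq> carrier R" "genideal R G = I"
    and "\<And>H. finite H \<Longrightarrow> H \<subseteq> carrier R \<Longrightarrow> genideal R H = I \<Longrightarrow> card G \<le> card H"
  shows "min_gens R I = card G"
  unfolding min_gens_def using assms by (intro Least_equality) blast+

lemma min_gens_x1_order_ideal:
  assumes "0 < d" "0 < i" "i \<le> n"
  shows "min_gens (Veronese d n :: ('k::field) mps ring) (x1_order_ideal d n i) = card (gen_exps d n i)"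
proof -
  let ?G = "ps_monom ` gen_exps d n i :: 'k mps set"
  have card_G: "card ?G = card (gen_exps d n i)"
    by (rule card_image) (auto simp: inj_on_def ps_monom_def fun_eq_iff split: if_splits)
  have "min_gens (Veronese d n :: 'k mps ring) (x1_order_ideal d n i) = card ?G"
  proof (rule min_gens_eqI)
    show "finite ?G" by (simp add: finite_gen_exps)
    show "?G \<subseteq> carrier (Veronese d n)"
      using ps_monom_gen_exp_in_x1_order_ideal by (auto simp: x1_order_ideal_def)
    show "genideal (Veronese d n) ?G = x1_order_ideal d n i" using assms by (rule genideal_gen_exps)
    show "card ?G \<le> card H" if "finite H" "H \<subseteq> carrier (Veronese d n)"
      "genideal (Veronese d n) H = x1_order_ideal d n i" for H :: "'k mps set"
      using card_gen_exps_le_card_generators[OF assms(1,2) that] card_G by simp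
  qed
  thus ?thesis using card_G by simp
qed

theorem lemma3p18:
  fixes d n i :: nat
  assumes "2 \<le> d" and "1 < n" and "1 \<le> i" and "i \<le> n - 1"
  shows "min_gens (Veronese d n :: ('k::field) mps ring)
            (symbolic_power (Veronese d n :: 'k mps ring) (Lideal d n) i)
         = (n - i + d - 1) choose (d - 1)"
proof -
  have d: "0 < d" and i: "0 < i" "i \<le> n" using assms by auto
  have "symbolic_power (Veronese d n :: 'k mps ring) (Lideal d n) i = x1_order_ideal d n i"
    using assms(1,2) by (intro symbolic_power_Lideal) simp_all
  thus ?thesis using min_gens_x1_order_ideal[OF d i] card_gen_exps[OF d i(2)] by simp
qed

end
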